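(* Let $\mathfrak{S}=(\mathcal{X},\mathsf{S},\gamma,(\Lambda_{a})_{a\in\mathcal{A}})$ be a spectral decomposition system for the Euclidean space $\mathfrak{H}$, let $\varphi\colon\mathcal{X}\to\left]-\infty,+\infty\right]$ be proper and $\mathsf{S}$-invariant, and let $X\in\mathfrak{H}$. Then: (i) for every $Y\in\mathfrak{H}$, $Y\in\partial(\varphi\circ\gamma)(X)$ if and only if $\gamma(Y)\in\partial\varphi(\gamma(X))$ and there exists $a\in\mathcal{A}$ such that $X=\Lambda_a\gamma(X)$ and $Y=\Lambda_a\gamma(Y)$; (ii) $\partial(\varphi\circ\gamma)(X)=\{\Lambda_ay: y\in\partial\varphi(\gamma(X)),\ a\in\mathcal{A}_X\}$; (iii) $\partial(\varphi\circ\gamma)(X)$ is a singleton if and only if $\partial\varphi(\gamma(X))$ is a singleton.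
   Context: A Euclidean space is a finite-dimensional real inner product space; inner products are written $\langle\cdot,\cdot\rangle$ and norms $\|\cdot\|$. Let $\mathfrak{H}$ and $\mathcal{X}$ be Euclidean spaces, let $\mathsf{S}$ be a group acting on $\mathcal{X}$ by linear isometries, let $\gamma\colon\mathfrak{H}\to\mathcal{X}$, and let $(\Lambda_a)_{a\in\mathcal{A}}$ be a family of linear operators from $\mathcal{X}$ to $\mathfrak{H}$. The orbit of $x$ is $\mathsf{S}\cdot x=\{s\cdot x: s\in\mathsf{S}\}$; a map $f$ on $\mathcal{X}$ is $\mathsf{S}$-invariant if $f(s\cdot x)=f(x)$ for all $s,x$. The tuple is a spectral decomposition system for $\mathfrak{H}$ if: [A] every $\Lambda_a$ is an isometry; [B] there exists an $\mathsf{S}$-invariant $\tau\colon\mathcal{X}\to\mathcal{X}$ with $\tau(x)\in\mathsf{S}\cdot x$ for all $x$ and $\gamma\circ\Lambda_a=\tau$ for all $a$; [C] for every $X\in\mathfrak{H}$ there is $a$ with $X=\Lambda_a\gamma(X)$; [D] $\langle X,Y\rangle\leq\langle\gamma(X),\gamma(Y)\rangle$ for all $X,Y\in\mathfrak{H}$. For $X\in\mathfrak{H}$, $\mathcal{A}_X=\{a\in\mathcal{A}: X=\Lambda_a\gamma(X)\}$. A function is proper if it never takes $-\infty$ and is finite somewhere; the subdifferential of $f$ on a Euclidean space $\mathcal{H}$ is $\partial f(x)=\{y:\langle z-x,y\rangle+f(x)\leq f(z)\ \forall z\in\mathcal{H}\}$. *)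

theory Defs
  imports "HOL-Analysis.Analysis" "HOL-Library.Extended_Real"
begin

definition linear_isometric_action :: "('g::group_add \<Rightarrow> 'x::euclidean_space \<Rightarrow> 'x) \<Rightarrow> bool" where
  "linear_isometric_action act \<longleftrightarrow>
     act 0 = id \<and>
     (\<forall>g h. act (g + h) = act g \<circ> act h) \<and>
     (\<forall>g. linear (act g) \<and> (\<forall>x. norm (act g x) = norm x))"

definition orbit :: "('g \<Rightarrow> 'x \<Rightarrow> 'x) \<Rightarrow> 'x \<Rightarrow> 'x set" where
  "orbit act x = {act s x | s. True}"

definition S_invariant :: "('g \<Rightarrow> 'x \<Rightarrow> 'x) \<Rightarrow> ('x \<Rightarrow> 'b) \<Rightarrow> bool" where
  "S_invariant act f \<longleftrightarrow> (\<forall>s x. f (act s x) = f x)"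

definition spectral_decomposition_system ::
  "('g::group_add \<Rightarrow> 'x::euclidean_space \<Rightarrow> 'x) \<Rightarrow> ('h::euclidean_space \<Rightarrow> 'x)
   \<Rightarrow> 'a set \<Rightarrow> ('a \<Rightarrow> 'x \<Rightarrow> 'h) \<Rightarrow> bool" where
  "spectral_decomposition_system act \<gamma> A \<Lambda> \<longleftrightarrow>
     linear_isometric_action act \<and>
     (\<forall>a\<in>A. linear (\<Lambda> a) \<and> (\<forall>x. norm (\<Lambda> a x) = norm x)) \<and>
     (\<exists>\<tau>. S_invariant act \<tau> \<and> (\<forall>x. \<tau> x \<in> orbit act x) \<and> (\<forall>a\<in>A. \<gamma> \<circ> \<Lambda> a = \<tau>)) \<and>
     (\<forall>X. \<exists>a\<in>A. X = \<Lambda> a (\<gamma> X)) \<and>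
     (\<forall>X Y. inner X Y \<le> inner (\<gamma> X) (\<gamma> Y))"

definition A_of :: "'a set \<Rightarrow> ('a \<Rightarrow> 'x \<Rightarrow> 'h) \<Rightarrow> ('h \<Rightarrow> 'x) \<Rightarrow> 'h \<Rightarrow> 'a set" where
  "A_of A \<Lambda> \<gamma> X = {a\<in>A. X = \<Lambda> a (\<gamma> X)}"

definition proper_fun :: "('x \<Rightarrow> ereal) \<Rightarrow> bool" where
  "proper_fun f \<longleftrightarrow> (\<forall>x. f x \<noteq> -\<infinity>) \<and> (\<exists>x. f x \<noteq> \<infinity>)"

definition subdiff :: "('x::real_inner \<Rightarrow> ereal) \<Rightarrow> 'x \<Rightarrow> 'x set" where
  "subdiff f x = {y. \<forall>z. ereal (inner (z - x) y) + f x \<le> f z}"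

end

theory Submission
  imports Defs
begin

(* Inequality [D] is an equality <X, Y> = <gamma X, gamma Y> exactly when X and Y have a common
   decomposition X = Lambda_a (gamma X), Y = Lambda_a (gamma Y): comparing norms shows that
   gamma is then additive on X, Y, and the decomposition of X + Y splits into decompositions of
   X and Y. Testing a subgradient Y of phi o gamma at Lambda_b (gamma X), which has the same
   gamma-value as X, forces this equality; transporting the subgradient inequality along
   Lambda_a then gives gamma Y in the subdifferential of phi. Conversely Lambda_a maps
   subgradients of phi at gamma X to subgradients of phi o gamma at X by [D] and the
   S-invariance of phi. For (iii), Lambda_a is injective, and all subgradients of phi o gamma
   at X have the norm of the unique subgradient of phi: a convex subset of a sphere in a
   Euclidean space has at most one point. *)

lemma inner_eq_if_linear_norm_eq:
  assumes "linear f" "\<And>x. norm (f x) = norm x"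
  shows "inner (f x) (f y) = inner x y"
  using assms by (simp add: dot_norm linear_add[OF assms(1), symmetric])

lemma eq_if_inner_diff_self_nonpos:
  fixes x y :: "'a::real_inner"
  assumes "inner (x - y) (x - y) \<le> 0"
  shows "x = y"
  using assms inner_ge_zero[of "x - y"] by simp

lemma eq_if_norm_midpoint_eq:
  fixes a b :: "'a::real_inner"
  assumes "norm a = c" "norm b = c" "norm ((1/2) *\<^sub>R (a + b)) = c"
  shows "a = b"
proof -
  have "norm (a + b) = norm a + norm b"
    using assms by simp
  then have "c *\<^sub>R b = c *\<^sub>R a"
    using norm_triangle_eq[of a b] assms(1,2) by simp
  then show ?thesis
    using assms(1,2) by (cases "c = 0") auto
qed

lemma convex_subdiff: "convex (subdiff f x)"
proof (rule convexI)
  fix y1 y2 and u v :: real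
  assume y: "y1 \<in> subdiff f x" "y2 \<in> subdiff f x" and uv: "0 \<le> u" "0 \<le> v" "u + v = 1"
  show "u *\<^sub>R y1 + v *\<^sub>R y2 \<in> subdiff f x"
    unfolding subdiff_def
  proof (intro CollectI allI)
    fix z
    have le1: "ereal (inner (z - x) y1) + f x \<le> f z" and le2: "ereal (inner (z - x) y2) + f x \<le> f z"
      using y unfolding subdiff_def by auto
    show "ereal (inner (z - x) (u *\<^sub>R y1 + v *\<^sub>R y2)) + f x \<le> f z"
    proof (cases "f x")
      case (real r)
      show ?thesis
      proof (cases "f z")
        case (real t)
        have "inner (z - x) y1 + r \<le> t" "inner (z - x) y2 + r \<le> t"
          using le1 le2 real \<open>f x = ereal r\<close> by auto
        then have "u * (inner (z - x) y1 + r) + v * (inner (z - x) y2 + r) \<le> u * t + v * t"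
          using uv by (intro add_mono mult_left_mono) auto
        moreover have "u * t + v * t = t"
          using uv(3) by (metis distrib_right mult_1)
        moreover have "u * (inner (z - x) y1 + r) + v * (inner (z - x) y2 + r)
            = inner (z - x) (u *\<^sub>R y1 + v *\<^sub>R y2) + r"
          using uv(3) by (simp add: inner_add_right distrib_left flip: distrib_right)
        ultimately have "inner (z - x) (u *\<^sub>R y1 + v *\<^sub>R y2) + r \<le> t"
          by simp
        then show ?thesis
          using real \<open>f x = ereal r\<close> by simp
      qed (use le1 real in auto)
    qed (use le1 in auto)
  qed
qed

lemma eq_if_convex_norm_const:
  fixes S :: "'a::real_inner set"
  assumes "convex S" "\<And>y. y \<in> S \<Longrightarrow> norm y = c" "a \<in> S" "b \<in> S"
  shows "a = b"
proof -
  have "(1/2) *\<^sub>R (a + b) \<in> S"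
    using convexD[OF assms(1,3,4), of "1/2" "1/2"] by (simp add: scaleR_right_distrib)
  then show ?thesis
    by (rule eq_if_norm_midpoint_eq[OF assms(2)[OF assms(3)] assms(2)[OF assms(4)] assms(2)])
qed

lemma subdiff_finite_value:
  assumes "proper_fun f" "y \<in> subdiff f x"
  obtains r where "f x = ereal r"
proof (cases "f x")
  case PInf
  obtain z where "f z \<noteq> \<infinity>"
    using assms(1) unfolding proper_fun_def by blast
  moreover have "ereal (inner (z - x) y) + f x \<le> f z"
    using assms(2) unfolding subdiff_def by blast
  ultimately show ?thesis
    using PInf by simp
qed (use assms(1) in \<open>auto simp: proper_fun_def\<close>)

locale spectral_decomposition =
  fixes act :: "'g::group_add \<Rightarrow> 'x::euclidean_space \<Rightarrow> 'x"
    and \<gamma> :: "'h::euclidean_space \<Rightarrow> 'x"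
    and A :: "'a set"
    and \<Lambda> :: "'a \<Rightarrow> 'x \<Rightarrow> 'h"
  assumes system: "spectral_decomposition_system act \<gamma> A \<Lambda>"
begin

lemma linear_Lambda: "a \<in> A \<Longrightarrow> linear (\<Lambda> a)"
  and norm_Lambda: "a \<in> A \<Longrightarrow> norm (\<Lambda> a x) = norm x"
  and decomposition: "\<exists>a\<in>A. X = \<Lambda> a (\<gamma> X)"
  and inner_le_inner_gamma: "inner X Y \<le> inner (\<gamma> X) (\<gamma> Y)"
  using system unfolding spectral_decomposition_system_def by blast+

lemma linear_act: "linear (act s)"
  and norm_act: "norm (act s x) = norm x"
  and act_add: "act (s + t) = act s \<circ> act t"
  and act_zero: "act 0 = id"
  using system unfolding spectral_decomposition_system_def linear_isometric_action_def by auto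

lemma inner_act: "inner (act s x) y = inner x (act (-s) y)"
proof -
  have "act s (act (-s) y) = y"
    using act_add[of s "-s"] act_zero by (metis comp_apply id_apply right_minus)
  then show ?thesis
    using inner_eq_if_linear_norm_eq[OF linear_act norm_act, of s x "act (-s) y"] by simp
qed

lemma inner_Lambda: "a \<in> A \<Longrightarrow> inner (\<Lambda> a x) (\<Lambda> a y) = inner x y"
  by (rule inner_eq_if_linear_norm_eq[OF linear_Lambda norm_Lambda])

lemma inj_Lambda:
  assumes "a \<in> A"
  shows "inj (\<Lambda> a)"
  unfolding linear_inj_iff_eq_0[OF linear_Lambda[OF assms]]
  using norm_Lambda[OF assms] by (metis norm_eq_zero)

lemma norm_gamma: "norm (\<gamma> X) = norm X"
proof -
  obtain a where a: "a \<in> A" "X = \<Lambda> a (\<gamma> X)"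
    using decomposition by blast
  show ?thesis
    using norm_Lambda[OF a(1), of "\<gamma> X"] by (simp add: a(2)[symmetric])
qed

lemma spectral_map:
  obtains \<tau> where "\<And>x. \<tau> x \<in> orbit act x" "\<And>a x. a \<in> A \<Longrightarrow> \<gamma> (\<Lambda> a x) = \<tau> x"
proof -
  obtain \<tau> where "\<forall>x. \<tau> x \<in> orbit act x" "\<forall>a\<in>A. \<gamma> \<circ> \<Lambda> a = \<tau>"
    using system unfolding spectral_decomposition_system_def by blast
  then show ?thesis
    using that fun_cong by fastforce
qed

lemma gamma_Lambda_in_orbit: "a \<in> A \<Longrightarrow> \<gamma> (\<Lambda> a x) \<in> orbit act x"
  by (rule spectral_map) simp

lemma gamma_Lambda_indep: "a \<in> A \<Longrightarrow> b \<in> A \<Longrightarrow> \<gamma> (\<Lambda> a x) = \<gamma> (\<Lambda> b x)"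
  by (rule spectral_map) simp

lemma gamma_Lambda_gamma:
  assumes "a \<in> A"
  shows "\<gamma> (\<Lambda> a (\<gamma> X)) = \<gamma> X"
proof -
  obtain b where b: "b \<in> A" "X = \<Lambda> b (\<gamma> X)"
    using decomposition by blast
  then have "\<gamma> (\<Lambda> b (\<gamma> X)) = \<gamma> X"
    by (metis arg_cong)
  then show ?thesis
    using gamma_Lambda_indep[OF assms b(1)] by simp
qed

lemma invariant_gamma_Lambda:
  "S_invariant act \<phi> \<Longrightarrow> a \<in> A \<Longrightarrow> \<phi> (\<gamma> (\<Lambda> a x)) = \<phi> x"
  using gamma_Lambda_in_orbit[of a x] unfolding S_invariant_def orbit_def by auto

lemma gamma_add_if_inner_eq:
  assumes "inner X Y = inner (\<gamma> X) (\<gamma> Y)"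
  shows "\<gamma> (X + Y) = \<gamma> X + \<gamma> Y"
proof -
  have "inner X (X + Y) \<le> inner (\<gamma> X) (\<gamma> (X + Y))"
    and "inner Y (X + Y) \<le> inner (\<gamma> Y) (\<gamma> (X + Y))"
    by (rule inner_le_inner_gamma)+
  moreover have "inner (\<gamma> Z) (\<gamma> Z) = inner Z Z" for Z
    using norm_gamma by (metis power2_norm_eq_inner)
  ultimately have "inner (\<gamma> (X + Y) - (\<gamma> X + \<gamma> Y)) (\<gamma> (X + Y) - (\<gamma> X + \<gamma> Y)) \<le> 0"
    using assms by (simp add: inner_add inner_diff inner_commute algebra_simps)
  then show ?thesis
    by (rule eq_if_inner_diff_self_nonpos)
qed

lemma simultaneous_decomposition:
  assumes eq: "inner X Y = inner (\<gamma> X) (\<gamma> Y)"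
  shows "\<exists>a\<in>A. X = \<Lambda> a (\<gamma> X) \<and> Y = \<Lambda> a (\<gamma> Y)"
proof -
  obtain a where a: "a \<in> A" "X + Y = \<Lambda> a (\<gamma> (X + Y))"
    using decomposition by blast
  define U V where "U = \<Lambda> a (\<gamma> X)" and "V = \<Lambda> a (\<gamma> Y)"
  have "X + Y = \<Lambda> a (\<gamma> (X + Y))"
    by (fact a(2))
  also have "\<dots> = U + V"
    using gamma_add_if_inner_eq[OF eq] linear_add[OF linear_Lambda[OF a(1)]] by (simp add: U_def V_def)
  finally have sum: "X + Y = U + V" .
  have "inner X V \<le> inner (\<gamma> X) (\<gamma> Y)" "inner U Y \<le> inner (\<gamma> X) (\<gamma> Y)"
    using inner_le_inner_gamma[of X V] inner_le_inner_gamma[of U Y] gamma_Lambda_gamma[OF a(1)]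
    by (simp_all add: U_def V_def)
  moreover have "inner U V = inner (\<gamma> X) (\<gamma> Y)"
    using inner_Lambda[OF a(1)] by (simp add: U_def V_def)
  moreover have "inner (X - U) (X - U) = inner X V - inner X Y - inner U V + inner U Y"
  proof -
    have "X - U = V - Y"
      using sum by (simp add: algebra_simps)
    then have "inner (X - U) (X - U) = inner (X - U) (V - Y)"
      by (rule arg_cong)
    then show ?thesis
      by (simp add: inner_diff)
  qed
  ultimately have "inner (X - U) (X - U) \<le> 0"
    using eq by linarith
  then have "X = U"
    by (rule eq_if_inner_diff_self_nonpos)
  with sum have "Y = V"
    by simp
  with \<open>X = U\<close> a(1) show ?thesis
    by (auto simp: U_def V_def)
qed

lemma proper_fun_comp_gamma:
  assumes "proper_fun \<phi>" "S_invariant act \<phi>"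
  shows "proper_fun (\<phi> \<circ> \<gamma>)"
proof -
  obtain a where a: "a \<in> A"
    using decomposition by blast
  obtain z where "\<phi> z \<noteq> \<infinity>"
    using assms(1) unfolding proper_fun_def by blast
  then have "(\<phi> \<circ> \<gamma>) (\<Lambda> a z) \<noteq> \<infinity>"
    using invariant_gamma_Lambda[OF assms(2) a] by simp
  then show ?thesis
    using assms(1) unfolding proper_fun_def by auto
qed

lemma Lambda_mem_subdiff_comp_gamma:
  assumes inv: "S_invariant act \<phi>" and y: "y \<in> subdiff \<phi> (\<gamma> X)"
    and a: "a \<in> A" "X = \<Lambda> a (\<gamma> X)"
  shows "\<Lambda> a y \<in> subdiff (\<phi> \<circ> \<gamma>) X"
  unfolding subdiff_def
proof (intro CollectI allI)
  fix Z
  obtain s where s: "\<gamma> (\<Lambda> a y) = act s y"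
    using gamma_Lambda_in_orbit[OF a(1)] unfolding orbit_def by blast
  define z where "z = act (-s) (\<gamma> Z)"
  have "inner (Z - X) (\<Lambda> a y) = inner Z (\<Lambda> a y) - inner (\<gamma> X) y"
    using inner_Lambda[OF a(1), of "\<gamma> X" y] by (simp add: inner_diff_left a(2)[symmetric])
  also have "\<dots> \<le> inner (\<gamma> Z) (act s y) - inner (\<gamma> X) y"
    using inner_le_inner_gamma[of Z "\<Lambda> a y"] s by simp
  also have "\<dots> = inner (z - \<gamma> X) y"
    using inner_act[of s y "\<gamma> Z"] by (simp add: z_def inner_diff inner_commute)
  finally have "ereal (inner (Z - X) (\<Lambda> a y)) + \<phi> (\<gamma> X) \<le> ereal (inner (z - \<gamma> X) y) + \<phi> (\<gamma> X)"
    by (intro add_right_mono) simp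
  also have "\<dots> \<le> \<phi> z"
    using y unfolding subdiff_def by blast
  also have "\<phi> z = \<phi> (\<gamma> Z)"
    using inv unfolding S_invariant_def z_def by simp
  finally show "ereal (inner (Z - X) (\<Lambda> a y)) + (\<phi> \<circ> \<gamma>) X \<le> (\<phi> \<circ> \<gamma>) Z"
    by simp
qed

lemma inner_eq_if_mem_subdiff_comp_gamma:
  assumes "proper_fun \<phi>" "S_invariant act \<phi>" and Y: "Y \<in> subdiff (\<phi> \<circ> \<gamma>) X"
  shows "inner X Y = inner (\<gamma> X) (\<gamma> Y)"
proof -
  obtain r where r: "(\<phi> \<circ> \<gamma>) X = ereal r"
    using subdiff_finite_value[OF proper_fun_comp_gamma[OF assms(1,2)] Y] .
  obtain b where b: "b \<in> A" "Y = \<Lambda> b (\<gamma> Y)"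
    using decomposition by blast
  have "ereal (inner (\<Lambda> b (\<gamma> X) - X) Y) + (\<phi> \<circ> \<gamma>) X \<le> (\<phi> \<circ> \<gamma>) (\<Lambda> b (\<gamma> X))"
    using Y unfolding subdiff_def by blast
  then have "inner (\<Lambda> b (\<gamma> X) - X) Y \<le> 0"
    using r gamma_Lambda_gamma[OF b(1)] by simp
  moreover have "inner (\<Lambda> b (\<gamma> X)) Y = inner (\<gamma> X) (\<gamma> Y)"
    using inner_Lambda[OF b(1), of "\<gamma> X" "\<gamma> Y"] by (simp add: b(2)[symmetric])
  ultimately show ?thesis
    using inner_le_inner_gamma[of X Y] by (simp add: inner_diff_left)
qed

lemma gamma_mem_subdiff_if_mem_subdiff_comp_gamma:
  assumes inv: "S_invariant act \<phi>" and Y: "Y \<in> subdiff (\<phi> \<circ> \<gamma>) X"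
    and a: "a \<in> A" "X = \<Lambda> a (\<gamma> X)" "Y = \<Lambda> a (\<gamma> Y)"
  shows "\<gamma> Y \<in> subdiff \<phi> (\<gamma> X)"
  unfolding subdiff_def
proof (intro CollectI allI)
  fix z
  have "inner (\<Lambda> a z - X) Y = inner (z - \<gamma> X) (\<gamma> Y)"
    using inner_Lambda[OF a(1), of "z - \<gamma> X" "\<gamma> Y"] linear_diff[OF linear_Lambda[OF a(1)]]
    by (simp add: a(2,3)[symmetric])
  moreover have "\<phi> (\<gamma> (\<Lambda> a z)) = \<phi> z"
    using invariant_gamma_Lambda[OF inv a(1)] .
  moreover have "ereal (inner (\<Lambda> a z - X) Y) + \<phi> (\<gamma> X) \<le> \<phi> (\<gamma> (\<Lambda> a z))"
    using Y unfolding subdiff_def by simp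
  ultimately show "ereal (inner (z - \<gamma> X) (\<gamma> Y)) + \<phi> (\<gamma> X) \<le> \<phi> z"
    by simp
qed

lemma mem_subdiff_comp_gamma_iff:
  assumes "proper_fun \<phi>" "S_invariant act \<phi>"
  shows "Y \<in> subdiff (\<phi> \<circ> \<gamma>) X \<longleftrightarrow>
    \<gamma> Y \<in> subdiff \<phi> (\<gamma> X) \<and> (\<exists>a\<in>A. X = \<Lambda> a (\<gamma> X) \<and> Y = \<Lambda> a (\<gamma> Y))"
proof
  assume Y: "Y \<in> subdiff (\<phi> \<circ> \<gamma>) X"
  then obtain a where a: "a \<in> A" "X = \<Lambda> a (\<gamma> X)" "Y = \<Lambda> a (\<gamma> Y)"
    using simultaneous_decomposition inner_eq_if_mem_subdiff_comp_gamma[OF assms] by blast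
  then show "\<gamma> Y \<in> subdiff \<phi> (\<gamma> X) \<and> (\<exists>a\<in>A. X = \<Lambda> a (\<gamma> X) \<and> Y = \<Lambda> a (\<gamma> Y))"
    using gamma_mem_subdiff_if_mem_subdiff_comp_gamma[OF assms(2) Y a] by blast
next
  assume "\<gamma> Y \<in> subdiff \<phi> (\<gamma> X) \<and> (\<exists>a\<in>A. X = \<Lambda> a (\<gamma> X) \<and> Y = \<Lambda> a (\<gamma> Y))"
  then obtain a where "\<gamma> Y \<in> subdiff \<phi> (\<gamma> X)" "a \<in> A" "X = \<Lambda> a (\<gamma> X)" "Y = \<Lambda> a (\<gamma> Y)"
    by blast
  then show "Y \<in> subdiff (\<phi> \<circ> \<gamma>) X"
    using Lambda_mem_subdiff_comp_gamma[OF assms(2)] by metis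
qed

lemma subdiff_comp_gamma_eq:
  assumes "proper_fun \<phi>" "S_invariant act \<phi>"
  shows "subdiff (\<phi> \<circ> \<gamma>) X = {\<Lambda> a y | a y. y \<in> subdiff \<phi> (\<gamma> X) \<and> a \<in> A_of A \<Lambda> \<gamma> X}"
  using mem_subdiff_comp_gamma_iff[OF assms] Lambda_mem_subdiff_comp_gamma[OF assms(2)]
  unfolding A_of_def by blast

lemma is_singleton_subdiff_comp_gamma_iff:
  assumes "proper_fun \<phi>" "S_invariant act \<phi>"
  shows "is_singleton (subdiff (\<phi> \<circ> \<gamma>) X) \<longleftrightarrow> is_singleton (subdiff \<phi> (\<gamma> X))"
proof
  obtain a where a: "a \<in> A" "X = \<Lambda> a (\<gamma> X)"
    using decomposition by blast
  have Lambda_mem: "\<Lambda> a y \<in> subdiff (\<phi> \<circ> \<gamma>) X" if "y \<in> subdiff \<phi> (\<gamma> X)" for y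
    using Lambda_mem_subdiff_comp_gamma[OF assms(2) that a] .
  have gamma_mem: "\<gamma> Y \<in> subdiff \<phi> (\<gamma> X)" if "Y \<in> subdiff (\<phi> \<circ> \<gamma>) X" for Y
    using mem_subdiff_comp_gamma_iff[OF assms] that by blast
  show "is_singleton (subdiff \<phi> (\<gamma> X))" if "is_singleton (subdiff (\<phi> \<circ> \<gamma>) X)"
  proof -
    obtain Y where Y: "subdiff (\<phi> \<circ> \<gamma>) X = {Y}"
      using \<open>is_singleton (subdiff (\<phi> \<circ> \<gamma>) X)\<close> by (rule is_singletonE)
    show ?thesis
      using Lambda_mem gamma_mem inj_Lambda[OF a(1)] unfolding Y
      by (intro is_singletonI') (auto dest: injD)
  qed
  show "is_singleton (subdiff (\<phi> \<circ> \<gamma>) X)" if "is_singleton (subdiff \<phi> (\<gamma> X))"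
  proof -
    obtain y where y: "subdiff \<phi> (\<gamma> X) = {y}"
      using \<open>is_singleton (subdiff \<phi> (\<gamma> X))\<close> by (rule is_singletonE)
    have "norm Y = norm y" if "Y \<in> subdiff (\<phi> \<circ> \<gamma>) X" for Y
      using gamma_mem[OF that] norm_gamma[of Y] unfolding y by simp
    then show ?thesis
      using Lambda_mem y eq_if_convex_norm_const[OF convex_subdiff]
      by (intro is_singletonI') blast+
  qed
qed

end

theorem proposition5p5:
  fixes act :: "'g::group_add \<Rightarrow> 'x::euclidean_space \<Rightarrow> 'x"
    and \<gamma> :: "'h::euclidean_space \<Rightarrow> 'x"
    and A :: "'a set"
    and \<Lambda> :: "'a \<Rightarrow> 'x \<Rightarrow> 'h"
    and \<phi> :: "'x \<Rightarrow> ereal"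
    and X :: 'h
  assumes "spectral_decomposition_system act \<gamma> A \<Lambda>"
    and "proper_fun \<phi>"
    and "S_invariant act \<phi>"
  shows "(\<forall>Y. Y \<in> subdiff (\<phi> \<circ> \<gamma>) X \<longleftrightarrow>
              (\<gamma> Y \<in> subdiff \<phi> (\<gamma> X) \<and> (\<exists>a\<in>A. X = \<Lambda> a (\<gamma> X) \<and> Y = \<Lambda> a (\<gamma> Y))))
       \<and> subdiff (\<phi> \<circ> \<gamma>) X = {\<Lambda> a y | a y. y \<in> subdiff \<phi> (\<gamma> X) \<and> a \<in> A_of A \<Lambda> \<gamma> X}
       \<and> (is_singleton (subdiff (\<phi> \<circ> \<gamma>) X) \<longleftrightarrow> is_singleton (subdiff \<phi> (\<gamma> X)))"
proof -
  interpret spectral_decomposition act \<gamma> A \<Lambda>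
    by (rule spectral_decomposition.intro) fact
  show ?thesis
    by (intro conjI allI mem_subdiff_comp_gamma_iff subdiff_comp_gamma_eq
        is_singleton_subdiff_comp_gamma_iff assms(2,3))
qed

end
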